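(* In the setting of the context, let $j\ge1$ and $d\ge1$ be integers. Assume there exists $m\ge1$ with $2^{m-1}>j$ and $d\in\mathcal E_m$. Then there exist integers $\alpha,\beta$ with $\alpha-\beta=d$, $P_j(\{\alpha\})>0$ and $P_j(\{\beta\})>0$.
   Context: Let $\pi_m\ge2$ ($m\ge1$) be integers and $\eta_{m,i}\ge0$ ($m\ge1$, $0\le i\le\pi_m-1$) integers; write $\eta_m:i\mapsto\eta_{m,i}$. $\overline Y=\prod_{m\ge1}\{0,\dots,\pi_m-1\}$ with product uniform measure $\overline\nu$ and odometer $\overline S$ (add $1$ to the first coordinate with carry to the right). $\gamma(\overline y)=\sum_{m=1}^{\overline t(\overline y)}\eta_{m,\overline y_m}$ where $\overline t(\overline y)$ is the smallest $t\ge1$ with $\overline y_t<\pi_t-1$. $P_j$ is the distribution under $\overline\nu$ of $\gamma+\gamma\circ\overline S+\dots+\gamma\circ\overline S^{j-1}$. $\mathcal S_m=\eta_m(\{0,\dots,\pi_m-2\})\cup\big(\eta_{m,\pi_m-1}+\eta_{m+1}(\{0,\dots,\pi_{m+1}-2\})\big)$, $\mathcal E_m=\mathcal S_m-\mathcal S_m$. *)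

theory Defs
  imports "HOL-Probability.Probability"
begin

text \<open>Coordinates are indexed by m \<ge> 1; points of Ybar are extensional functions on {1..}.\<close>

definition Ybar :: "(nat \<Rightarrow> nat) \<Rightarrow> (nat \<Rightarrow> nat) measure" where
  "Ybar \<pi> = PiM {1..} (\<lambda>m. measure_pmf (pmf_of_set {0..<\<pi> m}))"

text \<open>Odometer: add 1 to the first coordinate, carry to the right.\<close>
definition odo :: "(nat \<Rightarrow> nat) \<Rightarrow> (nat \<Rightarrow> nat) \<Rightarrow> (nat \<Rightarrow> nat)" where
  "odo \<pi> y = (\<lambda>m. if m = 0 then undefined
      else if (\<forall>i\<in>{1..<m}. y i = \<pi> i - 1)
           then (if y m = \<pi> m - 1 then 0 else y m + 1)
           else y m)"

definition tbar :: "(nat \<Rightarrow> nat) \<Rightarrow> (nat \<Rightarrow> nat) \<Rightarrow> nat" where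
  "tbar \<pi> y = (LEAST t. 1 \<le> t \<and> y t < \<pi> t - 1)"

text \<open>gamma; on the null set where no such t exists it is set to 0.\<close>
definition gam :: "(nat \<Rightarrow> nat) \<Rightarrow> (nat \<Rightarrow> nat \<Rightarrow> nat) \<Rightarrow> (nat \<Rightarrow> nat) \<Rightarrow> nat" where
  "gam \<pi> \<eta> y = (if \<exists>t\<ge>1. y t < \<pi> t - 1
      then (\<Sum>m=1..tbar \<pi> y. \<eta> m (y m)) else 0)"

definition birk :: "(nat \<Rightarrow> nat) \<Rightarrow> (nat \<Rightarrow> nat \<Rightarrow> nat) \<Rightarrow> nat \<Rightarrow> (nat \<Rightarrow> nat) \<Rightarrow> int" where
  "birk \<pi> \<eta> j y = int (\<Sum>i<j. gam \<pi> \<eta> ((odo \<pi> ^^ i) y))"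

definition Pj :: "(nat \<Rightarrow> nat) \<Rightarrow> (nat \<Rightarrow> nat \<Rightarrow> nat) \<Rightarrow> nat \<Rightarrow> int measure" where
  "Pj \<pi> \<eta> j = distr (Ybar \<pi>) (count_space UNIV) (birk \<pi> \<eta> j)"

definition Sset :: "(nat \<Rightarrow> nat) \<Rightarrow> (nat \<Rightarrow> nat \<Rightarrow> nat) \<Rightarrow> nat \<Rightarrow> int set" where
  "Sset \<pi> \<eta> m = (\<lambda>i. int (\<eta> m i)) ` {0..\<pi> m - 2}
      \<union> (\<lambda>i. int (\<eta> m (\<pi> m - 1)) + int (\<eta> (m+1) i)) ` {0..\<pi> (m+1) - 2}"

definition Eset :: "(nat \<Rightarrow> nat) \<Rightarrow> (nat \<Rightarrow> nat \<Rightarrow> nat) \<Rightarrow> nat \<Rightarrow> int set" where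
  "Eset \<pi> \<eta> m = {a - b | a b. a \<in> Sset \<pi> \<eta> m \<and> b \<in> Sset \<pi> \<eta> m}"

end

theory Submission
  imports Defs
begin

(*
  Read the first n coordinates of a point as the digits of a mixed-radix counter, which the
  odometer increments. If these digits are all maximal, the next \<pi>_1 \<cdots> \<pi>_n - 1 \<ge> 2^n - 1
  iterates have counter values 0, 1, 2, ..., so none of them has all n digits maximal and the
  \<gamma>-value of each is determined by its first n digits. Hence, on the cylinder fixing these
  digits to their maxima, \<gamma> + \<gamma>\<circ>S + ... + \<gamma>\<circ>S^(j-1) equals \<gamma> plus a constant c when j < 2^n.
  Fixing in addition digit n+1 (or digits n+1 and n+2) makes \<gamma> take any prescribed value of
  c + S_(n+1) on a cylinder of positive measure; differences of two such values exhaust E_(n+1).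
*)

lemma space_Ybar: "space (Ybar \<pi>) = PiE {1..} (\<lambda>_. UNIV)"
  by (simp add: Ybar_def space_PiM)

lemma measurable_coordinate_Ybar: "(\<lambda>y. y k) \<in> measurable (Ybar \<pi>) (count_space UNIV)"
proof (cases "k \<ge> 1")
  case True
  then have "(\<lambda>y. y k) \<in> measurable (Ybar \<pi>) (measure_pmf (pmf_of_set {0..<\<pi> k}))"
    unfolding Ybar_def by (intro measurable_component_singleton) auto
  then show ?thesis by (simp add: measurable_cong_sets[OF refl sets_measure_pmf_count_space])
next
  case False
  then have "\<And>y. y \<in> space (Ybar \<pi>) \<Longrightarrow> y k = undefined"
    by (auto simp: space_Ybar PiE_def extensional_def)
  then show ?thesis by (subst measurable_cong[where g="\<lambda>_. undefined"]) auto
qed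

lemma cylinder_in_sets_Ybar:
  assumes "finite J"
  shows "{y \<in> space (Ybar \<pi>). \<forall>k\<in>J. y k = x k} \<in> sets (Ybar \<pi>)"
proof -
  have "(\<lambda>y. y k) -` {x k} \<inter> space (Ybar \<pi>) \<in> sets (Ybar \<pi>)" for k
    by (rule measurable_sets[OF measurable_coordinate_Ybar]) auto
  then have "{y \<in> space (Ybar \<pi>). y k = x k} \<in> sets (Ybar \<pi>)" for k
    by (simp add: vimage_def Int_def conj_commute)
  then show ?thesis using assms by (intro sets.sets_Collect_finite_All) auto
qed

lemma measurable_Ybar_finitely_determined:
  fixes f :: "(nat \<Rightarrow> nat) \<Rightarrow> 'b::countable"
  assumes J: "finite J"
    and det: "\<And>y y'. y \<in> space (Ybar \<pi>) \<Longrightarrow> y' \<in> space (Ybar \<pi>) \<Longrightarrow>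
                       \<forall>k\<in>J. y k = y' k \<Longrightarrow> f y = f y'"
  shows "f \<in> measurable (Ybar \<pi>) (count_space UNIV)"
  unfolding measurable_count_space_eq2_countable
proof safe
  fix a
  let ?P = "f -` {a} \<inter> space (Ybar \<pi>)"
  let ?R = "(\<lambda>y. restrict y J) ` ?P"
  let ?cyl = "\<lambda>x. {y \<in> space (Ybar \<pi>). \<forall>k\<in>J. y k = x k}"
  have P_eq: "?P = (\<Union>x\<in>?R. ?cyl x)"
  proof
    show "(\<Union>x\<in>?R. ?cyl x) \<subseteq> ?P"
    proof
      fix y assume "y \<in> (\<Union>x\<in>?R. ?cyl x)"
      then obtain y0 where "y0 \<in> ?P" "y \<in> space (Ybar \<pi>)" "\<forall>k\<in>J. y k = y0 k" by auto
      then show "y \<in> ?P" using det[of y y0] by auto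
    qed
  qed force
  have "?R \<subseteq> PiE J (\<lambda>_. UNIV)" by auto
  moreover have "countable (PiE J (\<lambda>_. UNIV :: nat set))" using J by (intro countable_PiE) auto
  ultimately have "countable ?R" by (rule countable_subset)
  then have "(\<Union>x\<in>?R. ?cyl x) \<in> sets (Ybar \<pi>)"
    using J by (intro sets.countable_UN') (auto intro: cylinder_in_sets_Ybar)
  then show "?P \<in> sets (Ybar \<pi>)" using P_eq by simp
qed simp

lemma odo_apply: "1 \<le> k \<Longrightarrow> odo \<pi> y k = (if \<forall>i\<in>{1..<k}. y i = \<pi> i - 1
    then (if y k = \<pi> k - 1 then 0 else y k + 1) else y k)"
  by (simp add: odo_def)

lemma measurable_odo: "odo \<pi> \<in> measurable (Ybar \<pi>) (Ybar \<pi>)"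
  unfolding Ybar_def
proof (rule measurable_PiM_single')
  fix m :: nat assume "m \<in> {1..}"
  have "(\<lambda>y. odo \<pi> y m) \<in> measurable (Ybar \<pi>) (count_space UNIV)"
    by (rule measurable_Ybar_finitely_determined[of "{1..m}"]) (auto simp: odo_def)
  then show "(\<lambda>y. odo \<pi> y m) \<in> measurable (PiM {1..} (\<lambda>m. measure_pmf (pmf_of_set {0..<\<pi> m})))
      (measure_pmf (pmf_of_set {0..<\<pi> m}))"
    by (simp add: Ybar_def measurable_cong_sets[OF refl sets_measure_pmf_count_space])
qed (auto simp: odo_def PiE_def extensional_def)

lemma measurable_funpow_odo: "odo \<pi> ^^ i \<in> measurable (Ybar \<pi>) (Ybar \<pi>)"
  by (induction i) (auto intro: measurable_compose[OF _ measurable_odo])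

lemma measurable_gam: "gam \<pi> \<eta> \<in> measurable (Ybar \<pi>) (count_space UNIV)"
proof -
  have digit_small: "(\<lambda>y. 1 \<le> t \<and> y t < \<pi> t - 1) \<in> measurable (Ybar \<pi>) (count_space UNIV)" for t
    by (rule measurable_Ybar_finitely_determined[of "{t}"]) auto
  have exists_small: "Measurable.pred (Ybar \<pi>) (\<lambda>y. \<exists>t\<ge>1. y t < \<pi> t - 1)"
    by (rule pred_intros_countable, rule digit_small)
  have tbar: "tbar \<pi> \<in> measurable (Ybar \<pi>) (count_space UNIV)"
    unfolding tbar_def by (rule measurable_Least, rule digit_small)
  have partial_sum: "(\<lambda>y. \<Sum>m=1..n. \<eta> m (y m)) \<in> measurable (Ybar \<pi>) (count_space UNIV)" for n
    by (rule measurable_Ybar_finitely_determined[of "{1..n}"]) auto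
  have "(\<lambda>y. \<Sum>m=1..tbar \<pi> y. \<eta> m (y m)) \<in> measurable (Ybar \<pi>) (count_space UNIV)"
    by (rule measurable_compose_countable[OF partial_sum tbar])
  then show ?thesis
    unfolding gam_def[abs_def] by (rule measurable_If[OF _ _ exists_small[unfolded pred_def]]) simp
qed

lemma measurable_add_count_space:
  fixes F G :: "'a \<Rightarrow> 'b::{countable, plus}"
  assumes F: "F \<in> measurable M (count_space UNIV)" and G: "G \<in> measurable M (count_space UNIV)"
  shows "(\<lambda>x. F x + G x) \<in> measurable M (count_space UNIV)"
  by (rule measurable_compose_countable[OF _ F, where f="\<lambda>n x. n + G x"])
     (rule measurable_compose[OF G], simp)

lemma measurable_birk: "birk \<pi> \<eta> j \<in> measurable (Ybar \<pi>) (count_space UNIV)"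
proof -
  have "(\<lambda>y. \<Sum>i<j. gam \<pi> \<eta> ((odo \<pi> ^^ i) y)) \<in> measurable (Ybar \<pi>) (count_space UNIV)"
  proof (induction j)
    case (Suc j)
    have "(\<lambda>y. gam \<pi> \<eta> ((odo \<pi> ^^ j) y)) \<in> measurable (Ybar \<pi>) (count_space UNIV)"
      by (rule measurable_compose[OF measurable_funpow_odo measurable_gam])
    then show ?case using measurable_add_count_space[OF Suc] by simp
  qed simp
  then show ?thesis unfolding birk_def[abs_def] by (rule measurable_compose) simp
qed

lemma prob_space_Ybar: "prob_space (Ybar \<pi>)"
  unfolding Ybar_def by (intro prob_space_PiM) (auto intro: prob_space_measure_pmf)

lemma emeasure_cylinder_Ybar_pos:
  assumes J: "finite J" "J \<subseteq> {1..}" and x: "\<forall>k\<in>J. x k < \<pi> k"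
  shows "emeasure (Ybar \<pi>) {y \<in> space (Ybar \<pi>). \<forall>k\<in>J. y k = x k} > 0"
proof -
  have cyl_eq: "{y \<in> space (Ybar \<pi>). \<forall>k\<in>J. y k = x k}
     = prod_emb {1..} (\<lambda>m. measure_pmf (pmf_of_set {0..<\<pi> m})) J (PiE J (\<lambda>k. {x k}))"
    by (auto simp: prod_emb_def Ybar_def space_PiM PiE_def extensional_def Pi_def restrict_def)
  have "emeasure (Ybar \<pi>) {y \<in> space (Ybar \<pi>). \<forall>k\<in>J. y k = x k}
     = (\<Prod>k\<in>J. emeasure (measure_pmf (pmf_of_set {0..<\<pi> k})) {x k})"
    unfolding cyl_eq by (unfold Ybar_def, rule emeasure_PiM_emb) (use J in \<open>auto intro: prob_space_measure_pmf\<close>)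
  also have "\<dots> = (\<Prod>k\<in>J. ennreal (1 / real (\<pi> k)))"
    using x by (intro prod.cong) (auto simp: emeasure_pmf_single)
  also have "\<dots> = ennreal (\<Prod>k\<in>J. 1 / real (\<pi> k))"
    by (rule prod_ennreal) simp
  also have "\<dots> > 0"
  proof -
    have "0 < 1 / real (\<pi> k)" if "k \<in> J" for k
      using x that by auto
    then show ?thesis by (simp add: prod_pos)
  qed
  finally show ?thesis .
qed

lemma measure_Pj_singleton_pos:
  assumes J: "finite J" "J \<subseteq> {1..}" and x: "\<forall>k\<in>J. x k < \<pi> k"
    and const: "\<And>y. y \<in> space (Ybar \<pi>) \<Longrightarrow> \<forall>k\<in>J. y k = x k \<Longrightarrow> birk \<pi> \<eta> j y = \<alpha>"
  shows "measure (Pj \<pi> \<eta> j) {\<alpha>} > 0"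
proof -
  interpret prob_space "Ybar \<pi>" by (rule prob_space_Ybar)
  let ?A = "{y \<in> space (Ybar \<pi>). \<forall>k\<in>J. y k = x k}"
  let ?B = "birk \<pi> \<eta> j -` {\<alpha>} \<inter> space (Ybar \<pi>)"
  have "measure (Pj \<pi> \<eta> j) {\<alpha>} = prob ?B"
    unfolding Pj_def by (rule measure_distr[OF measurable_birk]) auto
  moreover have "prob ?A \<le> prob ?B"
    using const measurable_sets[OF measurable_birk] by (intro finite_measure_mono) auto
  moreover have "prob ?A > 0"
    using emeasure_cylinder_Ybar_pos[OF J x] by (simp add: emeasure_eq_measure)
  ultimately show ?thesis by simp
qed

text \<open>On the first n digits the odometer acts as the successor modulo place_value \<pi> (Suc n)
  on the counter digits_value \<pi> n.\<close>

definition place_value :: "(nat \<Rightarrow> nat) \<Rightarrow> nat \<Rightarrow> nat" where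
  "place_value \<pi> k = (\<Prod>l\<in>{1..<k}. \<pi> l)"

definition digits_value :: "(nat \<Rightarrow> nat) \<Rightarrow> nat \<Rightarrow> (nat \<Rightarrow> nat) \<Rightarrow> nat" where
  "digits_value \<pi> n z = (\<Sum>k=1..n. z k * place_value \<pi> k)"

lemma place_value_1 [simp]: "place_value \<pi> (Suc 0) = 1"
  by (simp add: place_value_def)

lemma place_value_Suc: "1 \<le> k \<Longrightarrow> place_value \<pi> (Suc k) = place_value \<pi> k * \<pi> k"
  by (simp add: place_value_def prod.atLeastLessThan_Suc)

lemma place_value_ge_power:
  assumes "\<forall>k\<in>{1..n}. 2 \<le> \<pi> k"
  shows "2 ^ n \<le> place_value \<pi> (Suc n)"
  using assms
proof (induction n)
  case (Suc n)
  then have "2 ^ n \<le> place_value \<pi> (Suc n)" "2 \<le> \<pi> (Suc n)" by auto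
  then have "2 ^ Suc n \<le> place_value \<pi> (Suc n) * \<pi> (Suc n)"
    using mult_le_mono by (simp add: mult.commute)
  then show ?case by (simp add: place_value_Suc)
qed simp

lemma digits_value_Suc: "digits_value \<pi> (Suc n) z = digits_value \<pi> n z + z (Suc n) * place_value \<pi> (Suc n)"
  by (simp add: digits_value_def)

lemma digits_value_all_max:
  assumes "\<forall>k\<in>{1..n}. 0 < \<pi> k" and "\<forall>k\<in>{1..n}. z k = \<pi> k - 1"
  shows "digits_value \<pi> n z + 1 = place_value \<pi> (Suc n)"
  using assms
proof (induction n)
  case (Suc n)
  then have IH: "digits_value \<pi> n z + 1 = place_value \<pi> (Suc n)"
    and z: "z (Suc n) = \<pi> (Suc n) - 1" by auto
  have "1 \<le> \<pi> (Suc n)" using bspec[OF Suc.prems(1), of "Suc n"] by simp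
  have "digits_value \<pi> (Suc n) z + 1 = place_value \<pi> (Suc n) + (\<pi> (Suc n) - 1) * place_value \<pi> (Suc n)"
    using IH z by (simp add: digits_value_Suc)
  also have "\<dots> = \<pi> (Suc n) * place_value \<pi> (Suc n)"
    using \<open>1 \<le> \<pi> (Suc n)\<close> by (simp add: diff_mult_distrib)
  also have "\<dots> = place_value \<pi> (Suc (Suc n))"
    by (simp add: place_value_Suc)
  finally show ?case .
qed (simp add: digits_value_def)

lemma digits_value_odo:
  assumes "\<forall>k\<in>{1..n}. z k < \<pi> k"
  shows "digits_value \<pi> n (odo \<pi> z) =
           (if \<forall>k\<in>{1..n}. z k = \<pi> k - 1 then 0 else digits_value \<pi> n z + 1)"
  using assms
proof (induction n)
  case (Suc n)
  then have IH: "digits_value \<pi> n (odo \<pi> z) =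
      (if \<forall>k\<in>{1..n}. z k = \<pi> k - 1 then 0 else digits_value \<pi> n z + 1)" by auto
  have odo_Suc: "odo \<pi> z (Suc n) = (if \<forall>i\<in>{1..n}. z i = \<pi> i - 1
      then (if z (Suc n) = \<pi> (Suc n) - 1 then 0 else z (Suc n) + 1) else z (Suc n))"
    using odo_apply[of "Suc n" \<pi> z] by (simp add: atLeastLessThanSuc_atLeastAtMost)
  have all_Suc: "(\<forall>k\<in>{1..Suc n}. z k = \<pi> k - 1) \<longleftrightarrow>
      (\<forall>k\<in>{1..n}. z k = \<pi> k - 1) \<and> z (Suc n) = \<pi> (Suc n) - 1"
    by (auto simp: le_Suc_eq)
  show ?case
  proof (cases "\<forall>k\<in>{1..n}. z k = \<pi> k - 1")
    case True
    moreover have "0 < \<pi> k" if "k \<in> {1..n}" for k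
      using bspec[OF Suc.prems, of k] that by simp
    ultimately have carry: "digits_value \<pi> n z + 1 = place_value \<pi> (Suc n)"
      by (intro digits_value_all_max) auto
    show ?thesis
      using True IH odo_Suc all_Suc carry by (simp add: digits_value_Suc algebra_simps)
  next
    case False
    then have "odo \<pi> z (Suc n) = z (Suc n)"
      using odo_Suc by (simp only: if_False)
    then show ?thesis
      using IH False all_Suc by (simp only: digits_value_Suc if_False simp_thms)
  qed
qed (simp add: digits_value_def)

lemma odo_digits_less:
  assumes "\<forall>k\<in>{1..n}. z k < \<pi> k"
  shows "\<forall>k\<in>{1..n}. odo \<pi> z k < \<pi> k"
  using assms by (auto simp: odo_apply)

lemma funpow_odo_prefix_eq:
  assumes "\<forall>k\<in>{1..n}. y k = y' k"
  shows "\<forall>k\<in>{1..n}. (odo \<pi> ^^ i) y k = (odo \<pi> ^^ i) y' k"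
proof (induction i)
  case (Suc i)
  then show ?case by (auto simp: odo_apply)
qed (use assms in simp)

lemma funpow_odo_from_all_max:
  assumes pos: "\<forall>k\<in>{1..n}. 0 < \<pi> k" and max: "\<forall>k\<in>{1..n}. y k = \<pi> k - 1"
    and i: "1 \<le> i" "i < place_value \<pi> (Suc n)"
  shows "(\<forall>k\<in>{1..n}. (odo \<pi> ^^ i) y k < \<pi> k) \<and> digits_value \<pi> n ((odo \<pi> ^^ i) y) = i - 1"
  using i
proof (induction i rule: nat_induct_at_least)
  case base
  have digits: "\<forall>k\<in>{1..n}. y k < \<pi> k" using max pos by auto
  show ?case using odo_digits_less[OF digits] digits_value_odo[OF digits] max by simp
next
  case (Suc i)
  then have IH: "\<forall>k\<in>{1..n}. (odo \<pi> ^^ i) y k < \<pi> k"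
      "digits_value \<pi> n ((odo \<pi> ^^ i) y) = i - 1" by auto
  have "\<not> (\<forall>k\<in>{1..n}. (odo \<pi> ^^ i) y k = \<pi> k - 1)"
  proof
    assume "\<forall>k\<in>{1..n}. (odo \<pi> ^^ i) y k = \<pi> k - 1"
    from digits_value_all_max[OF pos this] IH(2) Suc.hyps Suc.prems show False by simp
  qed
  then show ?case
    using odo_digits_less[OF IH(1)] digits_value_odo[OF IH(1)] IH(2) Suc.hyps by simp
qed

lemma funpow_odo_from_all_max_small_digit:
  assumes pos: "\<forall>k\<in>{1..n}. 0 < \<pi> k" and max: "\<forall>k\<in>{1..n}. y k = \<pi> k - 1"
    and i: "1 \<le> i" "i < place_value \<pi> (Suc n)"
  obtains t where "t \<in> {1..n}" "(odo \<pi> ^^ i) y t < \<pi> t - 1"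
proof -
  note iter = funpow_odo_from_all_max[OF pos max i]
  have "\<not> (\<forall>k\<in>{1..n}. (odo \<pi> ^^ i) y k = \<pi> k - 1)"
  proof
    assume "\<forall>k\<in>{1..n}. (odo \<pi> ^^ i) y k = \<pi> k - 1"
    from digits_value_all_max[OF pos this] iter i show False by simp
  qed
  then obtain t where "t \<in> {1..n}" "(odo \<pi> ^^ i) y t \<noteq> \<pi> t - 1" by blast
  moreover have "(odo \<pi> ^^ i) y t < \<pi> t" using iter \<open>t \<in> {1..n}\<close> by blast
  ultimately show thesis by (intro that[of t]) auto
qed

lemma gam_eq_sum_first_small_digit:
  assumes "1 \<le> t" "y t < \<pi> t - 1" and "\<forall>k\<in>{1..<t}. \<not> y k < \<pi> k - 1"
  shows "gam \<pi> \<eta> y = (\<Sum>k=1..t. \<eta> k (y k))"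
proof -
  have "tbar \<pi> y = t"
    unfolding tbar_def
  proof (rule Least_equality)
    fix s assume "1 \<le> s \<and> y s < \<pi> s - 1"
    then show "t \<le> s" using assms(3) by (meson atLeastLessThan_iff not_le)
  qed (use assms in simp)
  then show ?thesis using assms(1,2) by (auto simp: gam_def)
qed

lemma gam_prefix_eq:
  assumes agree: "\<forall>k\<in>{1..N}. y k = y' k" and t: "t \<in> {1..N}" "y t < \<pi> t - 1"
  shows "gam \<pi> \<eta> y = gam \<pi> \<eta> y'"
proof -
  let ?P = "\<lambda>t. 1 \<le> t \<and> y t < \<pi> t - 1"
  have P_tbar: "?P (tbar \<pi> y)" unfolding tbar_def by (rule LeastI[of _ t]) (use t in simp)
  have tbar_le: "tbar \<pi> y \<le> t" unfolding tbar_def by (rule Least_le) (use t in simp)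
  have first: "\<not> y k < \<pi> k - 1" if "k \<in> {1..<tbar \<pi> y}" for k
  proof
    assume "y k < \<pi> k - 1"
    then have "tbar \<pi> y \<le> k" unfolding tbar_def using that by (intro Least_le) simp
    then show False using that by simp
  qed
  have agree_tbar: "y k = y' k" if "k \<in> {1..tbar \<pi> y}" for k
    using agree tbar_le t that by auto
  have "gam \<pi> \<eta> y = (\<Sum>k=1..tbar \<pi> y. \<eta> k (y k))"
    using P_tbar first by (intro gam_eq_sum_first_small_digit) auto
  also have "\<dots> = (\<Sum>k=1..tbar \<pi> y. \<eta> k (y' k))"
    using agree_tbar by (intro sum.cong) auto
  also have "\<dots> = gam \<pi> \<eta> y'"
  proof (rule gam_eq_sum_first_small_digit[symmetric])
    show "1 \<le> tbar \<pi> y" "y' (tbar \<pi> y) < \<pi> (tbar \<pi> y) - 1"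
      using P_tbar agree_tbar[of "tbar \<pi> y"] by auto
    show "\<forall>k\<in>{1..<tbar \<pi> y}. \<not> y' k < \<pi> k - 1"
      using first agree_tbar by fastforce
  qed
  finally show ?thesis .
qed

lemma birk_eq_gam_plus_tail:
  assumes "1 \<le> j"
  shows "birk \<pi> \<eta> j y = int (gam \<pi> \<eta> y) + int (\<Sum>i\<in>{1..<j}. gam \<pi> \<eta> ((odo \<pi> ^^ i) y))"
proof -
  have "{..<j} = insert 0 {1..<j}" using assms by auto
  then show ?thesis by (simp add: birk_def)
qed

lemma birk_tail_from_all_max_eq:
  assumes pos: "\<forall>k\<in>{1..n}. 0 < \<pi> k"
    and max: "\<forall>k\<in>{1..n}. y k = \<pi> k - 1" and max': "\<forall>k\<in>{1..n}. y' k = \<pi> k - 1"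
    and j: "j \<le> place_value \<pi> (Suc n)"
  shows "(\<Sum>i\<in>{1..<j}. gam \<pi> \<eta> ((odo \<pi> ^^ i) y)) = (\<Sum>i\<in>{1..<j}. gam \<pi> \<eta> ((odo \<pi> ^^ i) y'))"
proof (rule sum.cong[OF refl])
  fix i assume i: "i \<in> {1..<j}"
  then obtain t where "t \<in> {1..n}" "(odo \<pi> ^^ i) y t < \<pi> t - 1"
    using funpow_odo_from_all_max_small_digit[OF pos max, of i] j by auto
  moreover have "\<forall>k\<in>{1..n}. (odo \<pi> ^^ i) y k = (odo \<pi> ^^ i) y' k"
    using max max' by (intro funpow_odo_prefix_eq) auto
  ultimately show "gam \<pi> \<eta> ((odo \<pi> ^^ i) y) = gam \<pi> \<eta> ((odo \<pi> ^^ i) y')"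
    using gam_prefix_eq[of n "(odo \<pi> ^^ i) y" "(odo \<pi> ^^ i) y'"] by blast
qed

lemma Sset_Suc_as_first_small_digit:
  assumes s: "s \<in> Sset \<pi> \<eta> (Suc n)" and pi: "\<forall>m\<ge>1. \<pi> m \<ge> 2"
  obtains t i where "n < t" "i < \<pi> t - 1"
    "int (\<Sum>k\<in>{1..<t}. \<eta> k (\<pi> k - 1)) + int (\<eta> t i) = int (\<Sum>k=1..n. \<eta> k (\<pi> k - 1)) + s"
proof -
  have small: "i < \<pi> t - 1" if "i \<le> \<pi> t - 2" "1 \<le> t" for i t
  proof -
    have "\<pi> t \<ge> 2" using pi that(2) by simp
    then show ?thesis using that(1) by linarith
  qed
  from s consider
      (one) i where "i \<le> \<pi> (Suc n) - 2" "s = int (\<eta> (Suc n) i)"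
    | (two) i where "i \<le> \<pi> (Suc (Suc n)) - 2"
        "s = int (\<eta> (Suc n) (\<pi> (Suc n) - 1)) + int (\<eta> (Suc (Suc n)) i)"
    unfolding Sset_def by auto
  then show thesis
  proof cases
    case one
    then show thesis
      by (intro that[of "Suc n" i] small) (auto simp: atLeastLessThanSuc_atLeastAtMost)
  next
    case two
    then show thesis
      by (intro that[of "Suc (Suc n)" i] small) (auto simp: atLeastLessThanSuc_atLeastAtMost)
  qed
qed

lemma gam_first_small_digit:
  assumes "1 \<le> t" "i < \<pi> t - 1" "\<forall>k\<in>{1..<t}. y k = \<pi> k - 1" "y t = i"
  shows "gam \<pi> \<eta> y = (\<Sum>k\<in>{1..<t}. \<eta> k (\<pi> k - 1)) + \<eta> t i"
proof -
  have "gam \<pi> \<eta> y = (\<Sum>k=1..t. \<eta> k (y k))"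
    using assms by (intro gam_eq_sum_first_small_digit) auto
  also have "\<dots> = (\<Sum>k\<in>{1..<t}. \<eta> k (y k)) + \<eta> t (y t)"
    using assms(1) by (simp add: sum.last_plus)
  finally show ?thesis using assms by simp
qed

lemma measure_Pj_shifted_Sset_pos:
  assumes pi: "\<forall>m\<ge>1. \<pi> m \<ge> 2" and j: "1 \<le> j" "j \<le> place_value \<pi> (Suc n)"
  obtains c where "\<forall>s\<in>Sset \<pi> \<eta> (Suc n). measure (Pj \<pi> \<eta> j) {c + s} > 0"
proof
  define y0 where "y0 = (\<lambda>k::nat. \<pi> k - 1)"
  define c where "c = int (\<Sum>k=1..n. \<eta> k (\<pi> k - 1)) + int (\<Sum>i\<in>{1..<j}. gam \<pi> \<eta> ((odo \<pi> ^^ i) y0))"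
  show "\<forall>s\<in>Sset \<pi> \<eta> (Suc n). measure (Pj \<pi> \<eta> j) {c + s} > 0"
  proof
    fix s assume s: "s \<in> Sset \<pi> \<eta> (Suc n)"
    obtain t i where t: "n < t" "i < \<pi> t - 1" and
      sum_eq: "int (\<Sum>k\<in>{1..<t}. \<eta> k (\<pi> k - 1)) + int (\<eta> t i) = int (\<Sum>k=1..n. \<eta> k (\<pi> k - 1)) + s"
      by (rule Sset_Suc_as_first_small_digit[OF s pi])
    define x where "x = (\<lambda>k. if k < t then \<pi> k - 1 else i)"
    show "measure (Pj \<pi> \<eta> j) {c + s} > 0"
    proof (rule measure_Pj_singleton_pos[of "{1..t}" x])
      show "\<forall>k\<in>{1..t}. x k < \<pi> k" using pi t by (auto simp: x_def)
      fix y assume y: "\<forall>k\<in>{1..t}. y k = x k"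
      then have "gam \<pi> \<eta> y = (\<Sum>k\<in>{1..<t}. \<eta> k (\<pi> k - 1)) + \<eta> t i"
        using t by (intro gam_first_small_digit) (auto simp: x_def)
      moreover have "(\<Sum>i\<in>{1..<j}. gam \<pi> \<eta> ((odo \<pi> ^^ i) y)) = (\<Sum>i\<in>{1..<j}. gam \<pi> \<eta> ((odo \<pi> ^^ i) y0))"
        using y t j pi by (intro birk_tail_from_all_max_eq) (auto simp: x_def y0_def)
      ultimately show "birk \<pi> \<eta> j y = c + s"
        using sum_eq j by (simp add: birk_eq_gam_plus_tail c_def)
    qed auto
  qed
qed

theorem mainTheorem16:
  fixes \<pi> :: "nat \<Rightarrow> nat" and \<eta> :: "nat \<Rightarrow> nat \<Rightarrow> nat" and j :: nat and d :: int
  assumes "\<forall>m\<ge>1. \<pi> m \<ge> 2"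
    and "j \<ge> 1" and "d \<ge> 1"
    and "\<exists>m\<ge>1. 2 ^ (m - 1) > j \<and> d \<in> Eset \<pi> \<eta> m"
  shows "\<exists>\<alpha> \<beta> :: int. \<alpha> - \<beta> = d \<and> measure (Pj \<pi> \<eta> j) {\<alpha>} > 0
           \<and> measure (Pj \<pi> \<eta> j) {\<beta>} > 0"
proof -
  obtain m where "1 \<le> m" "2 ^ (m - 1) > j" "d \<in> Eset \<pi> \<eta> m"
    using assms(4) by blast
  then obtain n where "2 ^ n > j" and "d \<in> Eset \<pi> \<eta> (Suc n)"
    by (cases m) auto
  then obtain a b where "d = a - b" "a \<in> Sset \<pi> \<eta> (Suc n)" "b \<in> Sset \<pi> \<eta> (Suc n)"
    and "j \<le> place_value \<pi> (Suc n)"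
    using place_value_ge_power[of n \<pi>] assms(1) unfolding Eset_def by fastforce
  moreover obtain c where "\<forall>s\<in>Sset \<pi> \<eta> (Suc n). measure (Pj \<pi> \<eta> j) {c + s} > 0"
    using measure_Pj_shifted_Sset_pos[OF assms(1,2) \<open>j \<le> place_value \<pi> (Suc n)\<close>] by blast
  ultimately show ?thesis
    by (intro exI[of _ "c + a"] exI[of _ "c + b"]) auto
qed

end
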